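(* Let $f=\min\{0,X,Y,X+Y\}$. Then for all $N\ge2$, $$N+1\le\dim(W_N)\le 4N,$$ where $W_N$ is the set associated with $\mathrm{rad}(f)$ as in the context.
   Context: A tropical (Laurent) polynomial in $2$ variables is $g=\min_{1\le j\le l}\{h_j+b_{j,1}X+b_{j,2}Y\}$ with $h_j\in\mathbb{R}$ and pairwise distinct $(b_{j,1},b_{j,2})\in\mathbb{Z}^2$. A point $x\in\mathbb{R}^2$ is a tropical solution of $g$ if the minimum is attained at least twice. $V(f)$ is the set of tropical solutions of $f$ and $\mathrm{rad}(f)$ is the set of all tropical polynomials vanishing at every point of $V(f)$. Let $T_N=\{0,\dots,N-1\}^2$ and identify $\mathbb{R}^{T_N}\cong\mathbb{R}^{N^2}$ with coordinates $w(k)$, $k\in T_N$. For $g$ with all exponents in $T_N$, its linearization is $\min_j\{h_j+w(b_{j,1},b_{j,2})\}$, satisfied by $w$ if the minimum is attained at least twice. $W_N$ is the set of all $w\in\mathbb{R}^{N^2}$ satisfying the linearizations of all $g\in\mathrm{rad}(f)$ with exponents in $T_N$. $\dim(W_N)$ is the minimum of the dimensions of tropical linear prevarieties (finite unions of convex polyhedra in $\mathbb{R}^{N^2}$) containing $W_N$. *)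

theory Defs
  imports Complex_Main
begin

text \<open>A tropical polynomial min_j (h_j + b_j1 X + b_j2 Y) with pairwise distinct exponent
  vectors is represented as a finite, nonempty partial map from exponents (in Z^2) to
  coefficients h_j.\<close>

type_synonym tpoly = "int \<times> int \<Rightarrow> real option"

definition is_tpoly :: "tpoly \<Rightarrow> bool" where
  "is_tpoly g \<longleftrightarrow> finite (dom g) \<and> dom g \<noteq> {}"

definition term_val :: "tpoly \<Rightarrow> int \<times> int \<Rightarrow> real \<times> real \<Rightarrow> real" where
  "term_val g b x = the (g b) + real_of_int (fst b) * fst x + real_of_int (snd b) * snd x"

definition trop_sol :: "tpoly \<Rightarrow> real \<times> real \<Rightarrow> bool" where
  "trop_sol g x \<longleftrightarrow> (\<exists>b\<in>dom g. \<exists>c\<in>dom g. b \<noteq> c \<and> term_val g b x = term_val g c x \<and>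
       (\<forall>d\<in>dom g. term_val g b x \<le> term_val g d x))"

definition V :: "tpoly \<Rightarrow> (real \<times> real) set" where
  "V g = {x. trop_sol g x}"

definition rad :: "tpoly \<Rightarrow> tpoly set" where
  "rad f = {g. is_tpoly g \<and> V f \<subseteq> V g}"

definition T :: "nat \<Rightarrow> (int \<times> int) set" where
  "T N = {0..<int N} \<times> {0..<int N}"

text \<open>R^{T_N} is represented by functions int \<times> int \<Rightarrow> real vanishing outside T_N.\<close>
definition RT :: "nat \<Rightarrow> (int \<times> int \<Rightarrow> real) set" where
  "RT N = {w. \<forall>k. k \<notin> T N \<longrightarrow> w k = 0}"

definition lin_sat :: "tpoly \<Rightarrow> (int \<times> int \<Rightarrow> real) \<Rightarrow> bool" where
  "lin_sat g w \<longleftrightarrow> (\<exists>b\<in>dom g. \<exists>c\<in>dom g. b \<noteq> c \<and> the (g b) + w b = the (g c) + w c \<and>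
       (\<forall>d\<in>dom g. the (g b) + w b \<le> the (g d) + w d))"

definition W :: "tpoly \<Rightarrow> nat \<Rightarrow> (int \<times> int \<Rightarrow> real) set" where
  "W f N = {w \<in> RT N. \<forall>g \<in> rad f. dom g \<subseteq> T N \<longrightarrow> lin_sat g w}"

definition trop_lin_prevariety :: "nat \<Rightarrow> (int \<times> int \<Rightarrow> real) set \<Rightarrow> bool" where
  "trop_lin_prevariety N P \<longleftrightarrow> (\<exists>G. finite G \<and> (\<forall>g\<in>G. is_tpoly g \<and> dom g \<subseteq> T N) \<and>
       P = {w \<in> RT N. \<forall>g\<in>G. lin_sat g w})"

definition polyhedronT :: "nat \<Rightarrow> (int \<times> int \<Rightarrow> real) set \<Rightarrow> bool" where
  "polyhedronT N C \<longleftrightarrow> (\<exists>F. finite F \<and>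
       C = {w \<in> RT N. \<forall>(a, c)\<in>F. (\<Sum>k\<in>T N. a k * w k) \<le> c})"

text \<open>Affine independence and affine dimension (empty set has dimension -1).\<close>
definition aff_indep :: "(int \<times> int \<Rightarrow> real) set \<Rightarrow> bool" where
  "aff_indep A \<longleftrightarrow> finite A \<and> (\<forall>u. (\<Sum>a\<in>A. u a) = 0 \<and> (\<forall>k. (\<Sum>a\<in>A. u a * a k) = 0)
       \<longrightarrow> (\<forall>a\<in>A. u a = 0))"

definition adim :: "(int \<times> int \<Rightarrow> real) set \<Rightarrow> int" where
  "adim S = int (Max {card A | A. A \<subseteq> S \<and> aff_indep A}) - 1"

text \<open>Dimension of a finite union of convex polyhedra: the least d such that the set is a
  finite union of convex polyhedra each of dimension at most d (i.e. the maximal dimension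
  of the pieces).\<close>
definition pdim :: "nat \<Rightarrow> (int \<times> int \<Rightarrow> real) set \<Rightarrow> int" where
  "pdim N P = Inf {d. \<exists>\<C>. finite \<C> \<and> \<Union>\<C> = P \<and> (\<forall>C\<in>\<C>. polyhedronT N C \<and> adim C \<le> d)}"

definition dimW :: "tpoly \<Rightarrow> nat \<Rightarrow> int" where
  "dimW f N = Inf {pdim N P | P. trop_lin_prevariety N P \<and> W f N \<subseteq> P}"

definition f0 :: tpoly where
  "f0 = [(0,0) \<mapsto> 0, (1,0) \<mapsto> 0, (0,1) \<mapsto> 0, (1,1) \<mapsto> 0]"

end

theory Submission
  imports Defs "HOL-Library.Function_Algebras" "HOL-Library.FuncSet" "HOL-Computational_Algebra.Polynomial"
begin

text \<open>
  V(f) is the union of the two coordinate axes. The points (<k, x>)_k, x \<in> V(f), lie in W_N, and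
  W_N is closed under adding constants and under pointwise minima. Minimizing suitable shifted
  parabolas yields a curve t \<mapsto> \<gamma>(t), 0 < t < 1, in W_N whose coordinates include t, t^2, ...,
  t^{N+1} up to affine changes, so any N + 2 of its points are affinely independent
  (Vandermonde). A finite cover of a prevariety containing W_N by polyhedra has a piece
  containing infinitely many of these points, hence of dimension at least N + 1.

  Conversely, the polynomials min over {i, i'} \<times> {j, j'} vanish on both axes, so they lie in
  rad(f). The prevariety they define is a finite union of polyhedra on each of which every such
  rectangle has two corners where all points agree. Colouring T_N by these coincidences gives
  no rectangle with four colours, hence at most 2N - 1 colours, and every piece has dimension
  at most 2N - 1.
\<close>

section \<open>Affine dimension\<close>

lemma sum_fun_apply: "(\<Sum>v\<in>S. f v) x = (\<Sum>v\<in>S. f v x)"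
  for f :: "'a \<Rightarrow> 'b \<Rightarrow> 'c::comm_monoid_add"
  by (induct S rule: infinite_finite_induct) auto

interpretation fun_space: vector_space "(\<lambda>c (f::int \<times> int \<Rightarrow> real) x. c * f x)"
  by unfold_locales (auto simp: fun_eq_iff algebra_simps)

lemma aff_indep_homogenize:
  assumes indep: "aff_indep A" and vanish: "\<forall>a\<in>A. a p = 0"
  shows "inj_on (\<lambda>a. a(p := 1)) A" and "fun_space.independent ((\<lambda>a. a(p := 1)) ` A)"
proof -
  let ?h = "\<lambda>a :: int \<times> int \<Rightarrow> real. a(p := 1)"
  have finA: "finite A" using indep aff_indep_def by auto
  show inj: "inj_on ?h A"
  proof (rule inj_onI, rule ext)
    fix a b k assume ab: "a \<in> A" "b \<in> A" and eq: "?h a = ?h b"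
    have "a p = 0" "b p = 0" using ab vanish by auto
    then show "a k = b k" using fun_cong[OF eq, of k] by (cases "k = p") auto
  qed
  show "fun_space.independent (?h ` A)"
  proof
    assume "fun_space.dependent (?h ` A)"
    then obtain u a where a: "a \<in> A" and nonzero: "u (?h a) \<noteq> 0"
      and rel: "(\<Sum>v\<in>?h ` A. (\<lambda>x. u v * v x)) = 0"
      unfolding fun_space.dependent_finite[OF finite_imageI[OF finA]] by blast
    have rel_at: "(\<Sum>b\<in>A. u (?h b) * ?h b k) = 0" for k
      using fun_cong[OF rel, of k] inj by (simp add: sum_fun_apply sum.reindex)
    have "(\<Sum>b\<in>A. u (?h b)) = 0" using rel_at[of p] by simp
    moreover have "\<forall>k. (\<Sum>b\<in>A. u (?h b) * b k) = 0"
    proof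
      fix k show "(\<Sum>b\<in>A. u (?h b) * b k) = 0"
        using rel_at[of k] vanish by (cases "k = p") (simp_all add: sum.neutral)
    qed
    ultimately have "u (?h a) = 0"
      using indep[unfolded aff_indep_def, THEN conjunct2, rule_format, OF conjI] a by blast
    then show False using nonzero by simp
  qed
qed

text \<open>Homogenizing at a coordinate p where all points vanish turns affine independence into
  linear independence, which costs one extra dimension.\<close>
lemma card_aff_indep_le_span:
  fixes E :: "'i \<Rightarrow> int \<times> int \<Rightarrow> real"
  assumes "finite I" and "\<forall>i\<in>I. E i p = 0" and "\<forall>a\<in>A. a p = 0"
    and "\<forall>a\<in>A. \<exists>l. \<forall>k. a k = (\<Sum>i\<in>I. l i * E i k)" and "aff_indep A"
  shows "card A \<le> card I + 1"
proof -
  let ?h = "\<lambda>a :: int \<times> int \<Rightarrow> real. a(p := 1)"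
  define \<delta> :: "int \<times> int \<Rightarrow> real" where "\<delta> = (\<lambda>k. if k = p then 1 else 0)"
  have "?h ` A \<subseteq> fun_space.span (insert \<delta> (E ` I))"
  proof clarify
    fix a assume a: "a \<in> A"
    then obtain l where l: "\<And>k. a k = (\<Sum>i\<in>I. l i * E i k)" using assms(4) by blast
    have "?h a = \<delta> + (\<Sum>i\<in>I. (\<lambda>k. l i * E i k))"
    proof
      fix k show "?h a k = (\<delta> + (\<Sum>i\<in>I. (\<lambda>k. l i * E i k))) k"
        using a l assms(2,3) by (cases "k = p") (simp_all add: \<delta>_def sum_fun_apply)
    qed
    also have "\<dots> \<in> fun_space.span (insert \<delta> (E ` I))"
      by (intro fun_space.span_add fun_space.span_sum fun_space.span_scale fun_space.span_base) auto
    finally show "?h a \<in> fun_space.span (insert \<delta> (E ` I))" .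
  qed
  then have "card (?h ` A) \<le> card (insert \<delta> (E ` I))"
    using fun_space.independent_span_bound[OF _ aff_indep_homogenize(2)[OF assms(5,3)]] assms(1)
    by simp
  also have "\<dots> \<le> card I + 1"
    using card_image_le[OF assms(1), of E] finite_imageI[OF assms(1), of E]
    by (simp add: card_insert_if)
  finally show ?thesis using card_image[OF aff_indep_homogenize(1)[OF assms(5,3)]] by simp
qed

lemma finite_T [simp]: "finite (T N)"
  unfolding T_def by simp

lemma card_T: "card (T N) = N * N"
  unfolding T_def by (simp add: card_cartesian_product)

lemma card_aff_indep_le_fibres:
  assumes "A \<subseteq> RT N" and "aff_indep A"
    and const: "\<forall>a\<in>A. \<forall>k\<in>T N. \<forall>k'\<in>T N. col k = col k' \<longrightarrow> a k = a k'"
  shows "card A \<le> card (col ` T N) + 1"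
proof (rule card_aff_indep_le_span[where E = "\<lambda>K k. if k \<in> T N \<and> col k = K then 1 else 0"
      and p = "(-1, -1)"])
  show "\<forall>K\<in>col ` T N. (if (-1, -1) \<in> T N \<and> col (-1, -1) = K then 1 else 0) = (0::real)"
    and "\<forall>a\<in>A. a (-1, -1) = 0"
    using assms(1) unfolding RT_def T_def by auto
  show "\<forall>a\<in>A. \<exists>l. \<forall>k. a k = (\<Sum>K\<in>col ` T N. l K * (if k \<in> T N \<and> col k = K then 1 else 0))"
  proof (intro ballI exI allI)
    fix a k assume a: "a \<in> A"
    let ?l = "\<lambda>K. a (SOME k. k \<in> T N \<and> col k = K)"
    show "a k = (\<Sum>K\<in>col ` T N. ?l K * (if k \<in> T N \<and> col k = K then 1 else 0))"
    proof (cases "k \<in> T N")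
      case True
      then have "?l (col k) = a k"
        using const a someI[of "\<lambda>k'. k' \<in> T N \<and> col k' = col k" k] by auto
      then show ?thesis using True by (simp add: if_distrib sum.delta cong: if_cong)
    next
      case False
      then show ?thesis using a assms(1) unfolding RT_def by (cases k) auto
    qed
  qed
qed (use assms(2) in simp_all)

lemma card_aff_indep_RT: "A \<subseteq> RT N \<Longrightarrow> aff_indep A \<Longrightarrow> card A \<le> N * N + 1"
  using card_aff_indep_le_fibres[where col = id] by (simp add: card_T)

lemma aff_indep_empty: "aff_indep {}"
  unfolding aff_indep_def by simp

lemma adim_le:
  assumes "\<And>A. A \<subseteq> C \<Longrightarrow> aff_indep A \<Longrightarrow> card A \<le> n"
  shows "adim C \<le> int n - 1"
proof -
  have "{card A | A. A \<subseteq> C \<and> aff_indep A} \<subseteq> {..n}" using assms by auto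
  then have "Max {card A | A. A \<subseteq> C \<and> aff_indep A} \<le> n"
    using aff_indep_empty by (subst Max_le_iff) (auto dest: finite_subset)
  then show ?thesis unfolding adim_def by simp
qed

lemma card_le_adim:
  assumes "C \<subseteq> RT N" and "B \<subseteq> C" and "aff_indep B"
  shows "int (card B) - 1 \<le> adim C"
proof -
  have "{card A | A. A \<subseteq> C \<and> aff_indep A} \<subseteq> {..N * N + 1}"
    using assms(1) card_aff_indep_RT by fastforce
  then have "card B \<le> Max {card A | A. A \<subseteq> C \<and> aff_indep A}"
    using assms(2,3) by (intro Max_ge) (auto dest: finite_subset)
  then show ?thesis unfolding adim_def by simp
qed

section \<open>Cells of tropical linear prevarieties\<close>

lemma sum_T_coord:
  fixes w :: "int \<times> int \<Rightarrow> real"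
  assumes "u \<in> T N"
  shows "(\<Sum>k\<in>T N. of_bool (k = u) * w k) = w u"
proof -
  have "(\<Sum>k\<in>T N. of_bool (k = u) * w k) = (\<Sum>k\<in>T N. if k = u then w k else 0)"
    by (intro sum.cong) auto
  then show ?thesis using assms by simp
qed

lemma sum_T_diff_coords:
  fixes w :: "int \<times> int \<Rightarrow> real"
  shows "u \<in> T N \<Longrightarrow> v \<in> T N \<Longrightarrow>
    (\<Sum>k\<in>T N. (of_bool (k = u) - of_bool (k = v)) * w k) = w u - w v"
  by (simp add: left_diff_distrib sum_subtractf sum_T_coord)

lemma polyhedronT_diff_constraints:
  assumes "finite D" and "\<forall>(u, v, r)\<in>D. u \<in> T N \<and> v \<in> T N"
  shows "polyhedronT N {w \<in> RT N. \<forall>(u, v, r)\<in>D. w u - w v \<le> r}"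
  unfolding polyhedronT_def
proof (intro exI conjI)
  let ?F = "(\<lambda>(u, v, r). (\<lambda>k. of_bool (k = u) - of_bool (k = v), r)) ` D"
  show "finite ?F" using assms(1) by simp
  show "{w \<in> RT N. \<forall>(u, v, r)\<in>D. w u - w v \<le> r} =
      {w \<in> RT N. \<forall>(a, c)\<in>?F. (\<Sum>k\<in>T N. a k * w k) \<le> c}"
  proof -
    have coords: "(\<Sum>k\<in>T N. (of_bool (k = u) - of_bool (k = v)) * w k) = w u - w v"
      if "(u, v, r) \<in> D" for u v r and w :: "int \<times> int \<Rightarrow> real"
      using assms(2) that by (auto intro!: sum_T_diff_coords)
    then show ?thesis by (auto simp: coords)
  qed
qed

definition lin_min_at :: "tpoly \<Rightarrow> (int \<times> int \<Rightarrow> real) \<Rightarrow> int \<times> int \<Rightarrow> int \<times> int \<Rightarrow> bool" where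
  "lin_min_at g w b c \<longleftrightarrow> the (g b) + w b = the (g c) + w c \<and>
     (\<forall>d\<in>dom g. the (g b) + w b \<le> the (g d) + w d)"

definition exp_pairs :: "tpoly \<Rightarrow> ((int \<times> int) \<times> (int \<times> int)) set" where
  "exp_pairs g = {(b, c). b \<in> dom g \<and> c \<in> dom g \<and> b \<noteq> c}"

lemma lin_sat_iff_exp_pairs:
  "lin_sat g w \<longleftrightarrow> (\<exists>bc\<in>exp_pairs g. lin_min_at g w (fst bc) (snd bc))"
proof
  assume "lin_sat g w"
  then obtain b c where "(b, c) \<in> exp_pairs g" "lin_min_at g w b c"
    unfolding lin_sat_def lin_min_at_def exp_pairs_def by blast
  then show "\<exists>bc\<in>exp_pairs g. lin_min_at g w (fst bc) (snd bc)" by (intro bexI) auto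
next
  assume "\<exists>bc\<in>exp_pairs g. lin_min_at g w (fst bc) (snd bc)"
  then obtain b c where "(b, c) \<in> exp_pairs g" "lin_min_at g w b c" by auto
  then show "lin_sat g w" unfolding lin_sat_def lin_min_at_def exp_pairs_def by blast
qed

lemma finite_exp_pairs: "finite (dom g) \<Longrightarrow> finite (exp_pairs g)"
  unfolding exp_pairs_def by (rule finite_subset[of _ "dom g \<times> dom g"]) auto

definition min_constraints :: "tpoly \<Rightarrow> int \<times> int \<Rightarrow> int \<times> int \<Rightarrow> ((int \<times> int) \<times> (int \<times> int) \<times> real) set" where
  "min_constraints g b c = {(b, c, the (g c) - the (g b)), (c, b, the (g b) - the (g c))} \<union>
     (\<lambda>d. (b, d, the (g d) - the (g b))) ` dom g"

lemma lin_min_at_iff_constraints: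
  "lin_min_at g w b c \<longleftrightarrow> (\<forall>(u, v, r)\<in>min_constraints g b c. w u - w v \<le> r)"
proof -
  have "(\<forall>(u, v, r)\<in>min_constraints g b c. w u - w v \<le> r) \<longleftrightarrow>
      w b - w c \<le> the (g c) - the (g b) \<and> w c - w b \<le> the (g b) - the (g c) \<and>
      (\<forall>d\<in>dom g. w b - w d \<le> the (g d) - the (g b))"
    unfolding min_constraints_def by auto
  moreover have "the (g b) + w b = the (g c) + w c \<longleftrightarrow>
      w b - w c \<le> the (g c) - the (g b) \<and> w c - w b \<le> the (g b) - the (g c)"
    by linarith
  moreover have "the (g b) + w b \<le> the (g d) + w d \<longleftrightarrow> w b - w d \<le> the (g d) - the (g b)" for d
    by linarith
  ultimately show ?thesis unfolding lin_min_at_def by simp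
qed

text \<open>\<sigma> chooses, for each polynomial of G, the pair of exponents at which the minimum
  of its linearization is attained.\<close>
definition lin_cell :: "nat \<Rightarrow> tpoly set \<Rightarrow> (tpoly \<Rightarrow> (int \<times> int) \<times> (int \<times> int)) \<Rightarrow>
    (int \<times> int \<Rightarrow> real) set" where
  "lin_cell N G \<sigma> = {w \<in> RT N. \<forall>g\<in>G. lin_min_at g w (fst (\<sigma> g)) (snd (\<sigma> g))}"

lemma polyhedronT_lin_cell:
  assumes "finite G" and "\<forall>g\<in>G. finite (dom g) \<and> dom g \<subseteq> T N" and "\<sigma> \<in> Pi G exp_pairs"
  shows "polyhedronT N (lin_cell N G \<sigma>)"
proof -
  let ?D = "\<Union>g\<in>G. min_constraints g (fst (\<sigma> g)) (snd (\<sigma> g))"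
  have "lin_cell N G \<sigma> = {w \<in> RT N. \<forall>(u, v, r)\<in>?D. w u - w v \<le> r}"
    unfolding lin_cell_def lin_min_at_iff_constraints ball_UN ..
  moreover have "\<forall>(u, v, r)\<in>?D. u \<in> T N \<and> v \<in> T N"
  proof (clarify)
    fix g u v r assume g: "g \<in> G" and uv: "(u, v, r) \<in> min_constraints g (fst (\<sigma> g)) (snd (\<sigma> g))"
    have "\<sigma> g \<in> exp_pairs g" using g assms(3) by auto
    then obtain b c where bc: "\<sigma> g = (b, c)" "b \<in> dom g" "c \<in> dom g"
      unfolding exp_pairs_def by blast
    then show "u \<in> T N \<and> v \<in> T N"
      using uv g assms(2) unfolding min_constraints_def by auto
  qed
  moreover have "finite ?D"
    using assms(1,2) by (auto simp: min_constraints_def)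
  ultimately show ?thesis using polyhedronT_diff_constraints[of ?D N] by simp
qed

lemma prevariety_eq_Union_lin_cells:
  "{w \<in> RT N. \<forall>g\<in>G. lin_sat g w} = (\<Union>\<sigma>\<in>PiE G exp_pairs. lin_cell N G \<sigma>)"
proof (intro equalityI subsetI)
  fix w assume w: "w \<in> {w \<in> RT N. \<forall>g\<in>G. lin_sat g w}"
  then have "\<forall>g\<in>G. \<exists>bc\<in>exp_pairs g. lin_min_at g w (fst bc) (snd bc)"
    by (simp add: lin_sat_iff_exp_pairs)
  then obtain \<sigma> where \<sigma>: "\<And>g. g \<in> G \<Longrightarrow> \<sigma> g \<in> exp_pairs g \<and> lin_min_at g w (fst (\<sigma> g)) (snd (\<sigma> g))"
    using bchoice[of G "\<lambda>g bc. bc \<in> exp_pairs g \<and> lin_min_at g w (fst bc) (snd bc)"] by blast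
  then have "restrict \<sigma> G \<in> PiE G exp_pairs" and "w \<in> lin_cell N G (restrict \<sigma> G)"
    using w by (auto simp: lin_cell_def)
  then show "w \<in> (\<Union>\<sigma>\<in>PiE G exp_pairs. lin_cell N G \<sigma>)" by blast
next
  fix w assume "w \<in> (\<Union>\<sigma>\<in>PiE G exp_pairs. lin_cell N G \<sigma>)"
  then obtain \<sigma> where "\<sigma> \<in> PiE G exp_pairs" "w \<in> lin_cell N G \<sigma>" by blast
  then show "w \<in> {w \<in> RT N. \<forall>g\<in>G. lin_sat g w}"
    unfolding lin_cell_def lin_sat_iff_exp_pairs by blast
qed

lemma prevariety_lin_cells:
  assumes "finite G" and "\<forall>g\<in>G. is_tpoly g \<and> dom g \<subseteq> T N"
  shows "\<exists>\<C>. finite \<C> \<and> \<Union>\<C> = {w \<in> RT N. \<forall>g\<in>G. lin_sat g w} \<and>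
     (\<forall>C\<in>\<C>. polyhedronT N C \<and> (\<forall>g\<in>G. \<exists>b\<in>dom g. \<exists>c\<in>dom g. b \<noteq> c \<and>
        (\<forall>w\<in>C. the (g b) + w b = the (g c) + w c)))"
proof (intro exI conjI ballI)
  let ?\<C> = "lin_cell N G ` PiE G exp_pairs"
  have dom_G: "\<forall>g\<in>G. finite (dom g) \<and> dom g \<subseteq> T N"
    using assms(2) unfolding is_tpoly_def by blast
  show "finite ?\<C>"
    using assms(1) dom_G finite_exp_pairs by (intro finite_imageI finite_PiE) auto
  show "\<Union>?\<C> = {w \<in> RT N. \<forall>g\<in>G. lin_sat g w}"
    by (simp add: prevariety_eq_Union_lin_cells)
  fix C assume "C \<in> ?\<C>"
  then obtain \<sigma> where \<sigma>: "\<sigma> \<in> PiE G exp_pairs" and C: "C = lin_cell N G \<sigma>" by blast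
  show "polyhedronT N C"
    unfolding C using assms(1) dom_G \<sigma> by (intro polyhedronT_lin_cell) (auto simp: PiE_def)
  fix g assume g: "g \<in> G"
  have "\<sigma> g \<in> exp_pairs g" using \<sigma> g by (rule PiE_mem)
  then obtain b c where bc: "\<sigma> g = (b, c)" "b \<in> dom g" "c \<in> dom g" "b \<noteq> c"
    unfolding exp_pairs_def by blast
  have "\<forall>w\<in>C. the (g b) + w b = the (g c) + w c"
  proof
    fix w assume "w \<in> C"
    then have "lin_min_at g w (fst (\<sigma> g)) (snd (\<sigma> g))" using g unfolding C lin_cell_def by blast
    then show "the (g b) + w b = the (g c) + w c" using bc(1) unfolding lin_min_at_def by simp
  qed
  then show "\<exists>b\<in>dom g. \<exists>c\<in>dom g. b \<noteq> c \<and> (\<forall>w\<in>C. the (g b) + w b = the (g c) + w c)"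
    using bc by blast
qed

definition polyhedral_cover :: "nat \<Rightarrow> (int \<times> int \<Rightarrow> real) set \<Rightarrow> int \<Rightarrow> bool" where
  "polyhedral_cover N P d \<longleftrightarrow>
     (\<exists>\<C>. finite \<C> \<and> \<Union>\<C> = P \<and> (\<forall>C\<in>\<C>. polyhedronT N C \<and> adim C \<le> d))"

lemma pdim_eq_Inf_polyhedral_cover: "pdim N P = Inf {d. polyhedral_cover N P d}"
  unfolding pdim_def polyhedral_cover_def ..

lemma polyhedronT_subset_RT: "polyhedronT N C \<Longrightarrow> C \<subseteq> RT N"
  unfolding polyhedronT_def by blast

lemma prevariety_polyhedral_cover:
  assumes "trop_lin_prevariety N P" shows "polyhedral_cover N P (int (N * N))"
proof -
  obtain G where G: "finite G" "\<forall>g\<in>G. is_tpoly g \<and> dom g \<subseteq> T N"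
    "P = {w \<in> RT N. \<forall>g\<in>G. lin_sat g w}"
    using assms unfolding trop_lin_prevariety_def by blast
  obtain \<C> where \<C>: "finite \<C>" "\<Union>\<C> = P" "\<forall>C\<in>\<C>. polyhedronT N C"
    using prevariety_lin_cells[OF G(1,2)] G(3) by blast
  have "adim C \<le> int (N * N + 1) - 1" if "C \<in> \<C>" for C
  proof (rule adim_le)
    fix A assume "A \<subseteq> C" "aff_indep A"
    moreover have "C \<subseteq> RT N" using \<C>(3) that polyhedronT_subset_RT by blast
    ultimately show "card A \<le> N * N + 1" using card_aff_indep_RT by blast
  qed
  then show ?thesis unfolding polyhedral_cover_def using \<C> by (intro exI[of _ \<C>]) simp
qed

section \<open>Points of W\<close>

definition monomial_point :: "nat \<Rightarrow> real \<times> real \<Rightarrow> int \<times> int \<Rightarrow> real" where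
  "monomial_point N x k =
     (if k \<in> T N then real_of_int (fst k) * fst x + real_of_int (snd k) * snd x else 0)"

definition shift_RT :: "nat \<Rightarrow> (int \<times> int \<Rightarrow> real) \<Rightarrow> real \<Rightarrow> int \<times> int \<Rightarrow> real" where
  "shift_RT N w c k = (if k \<in> T N then w k + c else 0)"

lemma monomial_point_in_W:
  assumes "x \<in> V f" shows "monomial_point N x \<in> W f N"
  unfolding W_def
proof (intro CollectI conjI ballI impI)
  show "monomial_point N x \<in> RT N" unfolding RT_def monomial_point_def by auto
  fix g assume g: "g \<in> rad f" and dom_g: "dom g \<subseteq> T N"
  have "trop_sol g x" using g assms unfolding rad_def V_def by auto
  moreover have "term_val g b x = the (g b) + monomial_point N x b" if "b \<in> dom g" for b
    using dom_g that unfolding term_val_def monomial_point_def by auto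
  ultimately show "lin_sat g (monomial_point N x)"
    unfolding trop_sol_def lin_sat_def by (metis (no_types, lifting))
qed

lemma lin_sat_shift:
  assumes "lin_sat g w" and "\<forall>b\<in>dom g. w' b = w b + c"
  shows "lin_sat g w'"
proof -
  obtain b1 c1 where "b1 \<in> dom g" "c1 \<in> dom g" "b1 \<noteq> c1" "the (g b1) + w b1 = the (g c1) + w c1"
    "\<forall>d\<in>dom g. the (g b1) + w b1 \<le> the (g d) + w d"
    using assms(1) unfolding lin_sat_def by blast
  then show ?thesis unfolding lin_sat_def using assms(2) by (intro bexI[of _ b1] bexI[of _ c1]) auto
qed

lemma shift_RT_in_W:
  assumes "w \<in> W f N" shows "shift_RT N w c \<in> W f N"
  unfolding W_def
proof (intro CollectI conjI ballI impI)
  show "shift_RT N w c \<in> RT N" unfolding RT_def shift_RT_def by auto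
  fix g assume "g \<in> rad f" and dom_g: "dom g \<subseteq> T N"
  then have "lin_sat g w" using assms unfolding W_def by auto
  then show "lin_sat g (shift_RT N w c)"
    by (rule lin_sat_shift) (use dom_g in \<open>auto simp: shift_RT_def\<close>)
qed

lemma lin_sat_min_if_dominated:
  assumes "b \<in> dom g" "c \<in> dom g" "b \<noteq> c" "the (g b) + w1 b = the (g c) + w1 c"
    and "\<forall>d\<in>dom g. the (g b) + w1 b \<le> the (g d) + w1 d"
    and "\<forall>d\<in>dom g. the (g b) + w1 b \<le> the (g d) + w2 d"
  shows "lin_sat g (\<lambda>k. min (w1 k) (w2 k))"
  unfolding lin_sat_def
proof (rule bexI[of _ b], rule bexI[of _ c], intro conjI ballI)
  have "w1 b \<le> w2 b" "the (g b) + w1 b \<le> the (g c) + w2 c"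
    using assms(1,2,6) by force+
  then show "the (g b) + min (w1 b) (w2 b) = the (g c) + min (w1 c) (w2 c)"
    using assms(4) by (simp add: min_def)
  fix d assume "d \<in> dom g"
  then show "the (g b) + min (w1 b) (w2 b) \<le> the (g d) + min (w1 d) (w2 d)"
    using \<open>w1 b \<le> w2 b\<close> assms(5,6) by (simp add: min_def)
qed (use assms in auto)

lemma lin_sat_min:
  assumes "lin_sat g w1" and "lin_sat g w2"
  shows "lin_sat g (\<lambda>k. min (w1 k) (w2 k))"
proof -
  obtain b1 c1 where 1: "b1 \<in> dom g" "c1 \<in> dom g" "b1 \<noteq> c1"
    "the (g b1) + w1 b1 = the (g c1) + w1 c1" "\<forall>d\<in>dom g. the (g b1) + w1 b1 \<le> the (g d) + w1 d"
    using assms(1) unfolding lin_sat_def by blast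
  obtain b2 c2 where 2: "b2 \<in> dom g" "c2 \<in> dom g" "b2 \<noteq> c2"
    "the (g b2) + w2 b2 = the (g c2) + w2 c2" "\<forall>d\<in>dom g. the (g b2) + w2 b2 \<le> the (g d) + w2 d"
    using assms(2) unfolding lin_sat_def by blast
  show ?thesis
  proof (cases "the (g b1) + w1 b1 \<le> the (g b2) + w2 b2")
    case True
    then show ?thesis using 1 2(5) by (intro lin_sat_min_if_dominated) force+
  next
    case False
    then have "lin_sat g (\<lambda>k. min (w2 k) (w1 k))" using 2 1(5) by (intro lin_sat_min_if_dominated) force+
    then show ?thesis by (simp add: min.commute)
  qed
qed

lemma min_in_W:
  "w1 \<in> W f N \<Longrightarrow> w2 \<in> W f N \<Longrightarrow> (\<lambda>k. min (w1 k) (w2 k)) \<in> W f N"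
  unfolding W_def RT_def by (auto intro: lin_sat_min)

lemma Min_in_W:
  assumes "finite S" and "S \<noteq> {}" and "\<forall>l\<in>S. F l \<in> W f N"
  shows "(\<lambda>k. Min ((\<lambda>l. F l k) ` S)) \<in> W f N"
  using assms
proof (induct S rule: finite_ne_induct)
  case (insert x S)
  then show ?case using min_in_W[of "F x" f N] by (simp add: Min_insert)
qed simp

lemma dom_f0: "dom f0 = {(0, 0), (1, 0), (0, 1), (1, 1)}"
  unfolding f0_def by auto

lemma term_val_f0:
  "b \<in> dom f0 \<Longrightarrow> term_val f0 b x = real_of_int (fst b) * fst x + real_of_int (snd b) * snd x"
  unfolding term_val_def f0_def by auto

lemma V_f0: "V f0 = {x. fst x = 0 \<or> snd x = 0}"
proof (intro equalityI subsetI)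
  fix x assume "x \<in> V f0"
  then obtain b c where "b \<in> dom f0" "c \<in> dom f0" "b \<noteq> c" "term_val f0 b x = term_val f0 c x"
    and "\<forall>d\<in>dom f0. term_val f0 b x \<le> term_val f0 d x"
    unfolding V_def trop_sol_def by blast
  then show "x \<in> {x. fst x = 0 \<or> snd x = 0}"
    by (cases x) (auto simp: dom_f0 term_val_f0)
next
  fix x :: "real \<times> real" assume "x \<in> {x. fst x = 0 \<or> snd x = 0}"
  then consider s where "x = (s, 0)" "0 \<le> s" | s where "x = (s, 0)" "s < 0"
    | r where "x = (0, r)" "0 \<le> r" | r where "x = (0, r)" "r < 0"
    by (cases x) (smt (verit) fst_conv snd_conv mem_Collect_eq)
  then show "x \<in> V f0"
  proof cases
    case 1 then show ?thesis unfolding V_def trop_sol_def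
      by (intro CollectI bexI[of _ "(0, 0)"] bexI[of _ "(0, 1)"]) (auto simp: term_val_f0 dom_f0)
  next
    case 2 then show ?thesis unfolding V_def trop_sol_def
      by (intro CollectI bexI[of _ "(1, 0)"] bexI[of _ "(1, 1)"]) (auto simp: term_val_f0 dom_f0)
  next
    case 3 then show ?thesis unfolding V_def trop_sol_def
      by (intro CollectI bexI[of _ "(0, 0)"] bexI[of _ "(1, 0)"]) (auto simp: term_val_f0 dom_f0)
  next
    case 4 then show ?thesis unfolding V_def trop_sol_def
      by (intro CollectI bexI[of _ "(0, 1)"] bexI[of _ "(1, 1)"]) (auto simp: term_val_f0 dom_f0)
  qed
qed

section \<open>The lower bound: a moment curve in W\<close>

definition moment_weight :: "real \<Rightarrow> int \<Rightarrow> real" where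
  "moment_weight t l = t ^ (nat l + 1) / 8"

text \<open>The points of W attached to the axis points (-2l, 0), shifted by l^2 plus a weight below
  1/8, take the value (i - l)^2 - i^2 + weight at (i, j); the minimum over l is attained at
  l = i.\<close>
definition parabola_min :: "nat \<Rightarrow> real \<Rightarrow> int \<times> int \<Rightarrow> real" where
  "parabola_min N t k = Min ((\<lambda>l. shift_RT N (monomial_point N (-2 * of_int l, 0))
     (of_int l ^ 2 + moment_weight t l) k) ` {0..<int N})"

definition moment_curve :: "nat \<Rightarrow> real \<Rightarrow> int \<times> int \<Rightarrow> real" where
  "moment_curve N t k =
     min (parabola_min N t k) (shift_RT N (monomial_point N (0, 1)) (-1/2 + t ^ (N + 1) / 8) k)"

lemma moment_curve_in_W:
  assumes "N \<ge> 1" shows "moment_curve N t \<in> W f0 N"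
proof -
  have "(\<lambda>k. parabola_min N t k) \<in> W f0 N"
    unfolding parabola_min_def using assms
    by (intro Min_in_W) (auto intro!: shift_RT_in_W monomial_point_in_W simp: V_f0)
  moreover have "shift_RT N (monomial_point N (0, 1)) c \<in> W f0 N" for c
    by (intro shift_RT_in_W monomial_point_in_W) (simp add: V_f0)
  ultimately show ?thesis unfolding moment_curve_def by (rule min_in_W)
qed

lemma moment_weight_bounds: "0 < t \<Longrightarrow> t < 1 \<Longrightarrow> 0 < moment_weight t l \<and> moment_weight t l < 1/8"
  unfolding moment_weight_def using power_Suc_less_one[of t "nat l"] by simp

lemma parabola_min_value:
  assumes t: "0 < t" "t < 1" and k: "(i, j) \<in> T N"
  shows "parabola_min N t (i, j) = moment_weight t i - (of_int i)^2"
proof -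
  let ?L = "\<lambda>l. shift_RT N (monomial_point N (-2 * of_int l, 0)) (of_int l ^ 2 + moment_weight t l) (i, j)"
  have L: "?L l = (of_int l - of_int i)^2 - (of_int i)^2 + moment_weight t l" for l
    using k unfolding shift_RT_def monomial_point_def by (simp add: power2_eq_square algebra_simps)
  have i: "i \<in> {0..<int N}" using k unfolding T_def by auto
  have "Min (?L ` {0..<int N}) = moment_weight t i - (of_int i)^2"
  proof (rule Min_eqI)
    show "moment_weight t i - (of_int i)^2 \<in> ?L ` {0..<int N}"
    proof (rule image_eqI[of _ _ i])
      show "moment_weight t i - (of_int i)^2 = ?L i" unfolding L by simp
    qed (use i in simp)
  next
    fix y assume "y \<in> ?L ` {0..<int N}"
    then obtain l where y: "y = ?L l" by auto
    show "moment_weight t i - (of_int i)^2 \<le> y"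
    proof (cases "l = i")
      case False
      then have "1 \<le> \<bar>of_int l - of_int i :: real\<bar>" by linarith
      then have "1 \<le> (of_int l - of_int i :: real)^2"
        by (metis abs_ge_self one_le_power order.trans power2_abs)
      then show ?thesis
        using y L[of l] moment_weight_bounds[OF t, of i] moment_weight_bounds[OF t, of l] by linarith
    qed (use y L in simp)
  qed simp
  then show ?thesis unfolding parabola_min_def .
qed

lemma moment_curve_value:
  assumes t: "0 < t" "t < 1" and k: "(i, j) \<in> T N"
  shows "moment_curve N t (i, j) =
    (if (i, j) = (0, 0) then -1/2 + t ^ (N + 1) / 8 else moment_weight t i - (of_int i)^2)"
proof -
  have ij: "0 \<le> i" "0 \<le> j" using k unfolding T_def by auto
  have t_pow: "0 < t ^ (N + 1)" "t ^ (N + 1) < 1" using t power_Suc_less_one[of t N] by simp_all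
  note bounds = ij t_pow moment_weight_bounds[OF t, of i]
  have min_form: "moment_curve N t (i, j) =
      min (moment_weight t i - (of_int i)^2) (of_int j - 1/2 + t ^ (N + 1) / 8)"
    using k unfolding moment_curve_def parabola_min_value[OF t k] shift_RT_def monomial_point_def
    by simp
  consider "i = 0" "j = 0" | "i = 0" "j \<ge> 1" | "i \<ge> 1" using ij by linarith
  then show ?thesis
  proof cases
    case 1
    then show ?thesis unfolding min_form using bounds by (simp add: min_def)
  next
    case 2
    then have "moment_weight t i - (of_int i)^2 \<le> of_int j - 1/2 + t ^ (N + 1) / 8"
      using bounds by simp
    then show ?thesis unfolding min_form using 2 by (simp add: min_def)
  next
    case 3
    then have "1 \<le> (of_int i :: real)^2" "0 \<le> (of_int j :: real)"
      using ij by (simp_all add: one_le_power)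
    then have "moment_weight t i - (of_int i)^2 \<le> of_int j - 1/2 + t ^ (N + 1) / 8"
      using bounds by linarith
    then show ?thesis unfolding min_form using 3 by (simp add: min_def)
  qed
qed

text \<open>Coordinates (0, 1), (m - 1, 0) for 2 \<le> m \<le> N, and (0, 0) of the curve are t^m/8 up to
  constants, for m = 1, ..., N + 1.\<close>
lemma moment_curve_power_coordinate:
  assumes N: "N \<ge> 2" and m: "1 \<le> m" "m \<le> N + 1"
  shows "\<exists>k \<alpha>. \<forall>t\<in>{0<..<1}. moment_curve N t k = \<alpha> + t ^ m / 8"
proof -
  consider "m = 1" | "2 \<le> m \<and> m \<le> N" | "m = N + 1" using m by linarith
  then show ?thesis
  proof cases
    case 1
    have "(0, 1) \<in> T N" using N unfolding T_def by auto
    then have "\<forall>t\<in>{0<..<1}. moment_curve N t (0, 1) = 0 + t ^ m / 8"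
      using 1 by (auto simp: moment_curve_value moment_weight_def)
    then show ?thesis by blast
  next
    case 2
    then have "(int m - 1, 0) \<in> T N" "nat (int m - 1) + 1 = m" using N unfolding T_def by auto
    then have "\<forall>t\<in>{0<..<1}. moment_curve N t (int m - 1, 0) = - real_of_int ((int m - 1)^2) + t ^ m / 8"
      using 2 by (auto simp: moment_curve_value moment_weight_def)
    then show ?thesis by blast
  next
    case 3
    have "(0, 0) \<in> T N" using N unfolding T_def by auto
    then have "\<forall>t\<in>{0<..<1}. moment_curve N t (0, 0) = -1/2 + t ^ m / 8"
      using 3 by (auto simp: moment_curve_value)
    then show ?thesis by blast
  qed
qed

lemma power_sums_zero_imp_zero:
  fixes S :: "real set"
  assumes "finite S" and zero: "\<forall>m<card S. (\<Sum>s\<in>S. v s * s ^ m) = 0"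
  shows "\<forall>s\<in>S. v s = 0"
proof
  fix s0 assume s0: "s0 \<in> S"
  define q where "q = (\<Prod>s\<in>S - {s0}. [:-s, 1:])"
  have poly_q: "poly q x = (\<Prod>s\<in>S - {s0}. x - s)" for x
    unfolding q_def by (simp add: poly_prod)
  have "degree q \<le> (\<Sum>s\<in>S - {s0}. degree [:-s, 1:])"
    unfolding q_def using degree_prod_sum_le[of "S - {s0}" "\<lambda>s. [:-s, 1:]"] assms(1)
    by (simp add: o_def)
  also have "\<dots> = card S - 1" using assms(1) s0 by simp
  also have "\<dots> < card S" using assms(1) s0 card_gt_0_iff[of S] by auto
  finally have deg: "degree q < card S" .
  have "(\<Sum>s\<in>S. v s * poly q s) = (\<Sum>s\<in>S. \<Sum>i\<le>degree q. coeff q i * (v s * s ^ i))"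
    by (simp add: poly_altdef sum_distrib_left mult_ac)
  also have "\<dots> = (\<Sum>i\<le>degree q. coeff q i * (\<Sum>s\<in>S. v s * s ^ i))"
    by (subst sum.swap) (simp add: sum_distrib_left)
  also have "\<dots> = 0"
    using deg zero by (intro sum.neutral) auto
  finally have "(\<Sum>s\<in>S. v s * poly q s) = 0" .
  moreover have "(\<Sum>s\<in>S - {s0}. v s * poly q s) = 0"
    using assms(1) by (intro sum.neutral) (auto simp: poly_q)
  then have "(\<Sum>s\<in>S. v s * poly q s) = v s0 * poly q s0"
    using sum.remove[OF assms(1) s0, of "\<lambda>s. v s * poly q s"] by simp
  moreover have "poly q s0 \<noteq> 0"
    using assms(1) by (simp add: poly_q)
  ultimately show "v s0 = 0" by simp
qed

definition power_coordinates :: "(real \<Rightarrow> int \<times> int \<Rightarrow> real) \<Rightarrow> real set \<Rightarrow> nat \<Rightarrow> bool" where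
  "power_coordinates \<gamma> X n \<longleftrightarrow> (\<forall>m\<in>{1..n}. \<exists>k \<alpha> c. c \<noteq> 0 \<and> (\<forall>t\<in>X. \<gamma> t k = \<alpha> + c * t ^ m))"

lemma inj_on_power_coordinates:
  assumes "power_coordinates \<gamma> X n" and "1 \<le> n"
  shows "inj_on \<gamma> X"
proof -
  have "1 \<in> {1..n}" using assms(2) by simp
  then obtain k \<alpha> c where "c \<noteq> 0" and coord: "\<forall>t\<in>X. \<gamma> t k = \<alpha> + c * t ^ 1"
    using assms(1) unfolding power_coordinates_def by blast
  show ?thesis
  proof (rule inj_onI)
    fix s t assume "s \<in> X" "t \<in> X" "\<gamma> s = \<gamma> t"
    then have "\<alpha> + c * s = \<alpha> + c * t" using coord by (metis power_one_right)
    then show "s = t" using \<open>c \<noteq> 0\<close> by simp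
  qed
qed

lemma aff_indep_power_coordinates:
  assumes pc: "power_coordinates \<gamma> X n" and "1 \<le> n"
    and S: "S \<subseteq> X" "finite S" "card S \<le> n + 1"
  shows "aff_indep (\<gamma> ` S)"
  unfolding aff_indep_def
proof (intro conjI allI impI ballI)
  show "finite (\<gamma> ` S)" using S by simp
  fix u a assume rel: "(\<Sum>a\<in>\<gamma> ` S. u a) = 0 \<and> (\<forall>k. (\<Sum>a\<in>\<gamma> ` S. u a * a k) = 0)"
    and a: "a \<in> \<gamma> ` S"
  have inj: "inj_on \<gamma> S" using inj_on_power_coordinates[OF assms(1,2)] S(1) by (rule inj_on_subset)
  define v where "v s = u (\<gamma> s)" for s
  have sum_v: "(\<Sum>s\<in>S. v s) = 0"
    using rel inj unfolding v_def by (simp add: sum.reindex)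
  have sum_v_coord: "(\<Sum>s\<in>S. v s * \<gamma> s k) = 0" for k
  proof -
    have "(\<Sum>a\<in>\<gamma> ` S. u a * a k) = 0" using rel by blast
    then show ?thesis using inj unfolding v_def by (simp add: sum.reindex)
  qed
  have "(\<Sum>s\<in>S. v s * s ^ m) = 0" if m: "m < card S" for m
  proof (cases "m = 0")
    case False
    then have "m \<in> {1..n}" using m S(3) by simp
    then obtain k \<alpha> c where c: "c \<noteq> 0" "\<forall>t\<in>X. \<gamma> t k = \<alpha> + c * t ^ m"
      using pc unfolding power_coordinates_def by blast
    have "0 = (\<Sum>s\<in>S. v s * \<gamma> s k)" using sum_v_coord by simp
    also have "\<dots> = (\<Sum>s\<in>S. \<alpha> * v s + c * (v s * s ^ m))"
      using c(2) S(1) by (intro sum.cong) (auto simp: algebra_simps)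
    also have "\<dots> = \<alpha> * (\<Sum>s\<in>S. v s) + c * (\<Sum>s\<in>S. v s * s ^ m)"
      by (simp add: sum.distrib sum_distrib_left)
    finally show ?thesis using sum_v c(1) by simp
  qed (use sum_v in simp)
  then have "\<forall>s\<in>S. v s = 0" using power_sums_zero_imp_zero[OF S(2)] by blast
  then show "u a = 0" using a unfolding v_def by auto
qed

lemma moment_curve_power_coordinates:
  assumes "N \<ge> 2" shows "power_coordinates (moment_curve N) {0<..<1} (N + 1)"
  unfolding power_coordinates_def
proof
  fix m assume "m \<in> {1..N + 1}"
  then have "1 \<le> m" "m \<le> N + 1" by simp_all
  then obtain k \<alpha> where "\<forall>t\<in>{0<..<1}. moment_curve N t k = \<alpha> + t ^ m / 8"
    using moment_curve_power_coordinate[OF assms] by blast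
  then show "\<exists>k \<alpha> c. c \<noteq> 0 \<and> (\<forall>t\<in>{0<..<1}. moment_curve N t k = \<alpha> + c * t ^ m)"
    by (intro exI[of _ k] exI[of _ \<alpha>] exI[of _ "1/8"]) simp
qed

text \<open>Infinitely many points of the curve lie in one polyhedron of the cover, and any n + 1 of
  them are affinely independent.\<close>
lemma polyhedral_cover_ge_power_coordinates:
  assumes "polyhedral_cover N P d" and "\<gamma> ` X \<subseteq> P" and "infinite X"
    and "power_coordinates \<gamma> X n" and "1 \<le> n"
  shows "int n \<le> d"
proof -
  obtain \<C> where \<C>: "finite \<C>" "\<Union>\<C> = P" "\<forall>C\<in>\<C>. polyhedronT N C \<and> adim C \<le> d"
    using assms(1) unfolding polyhedral_cover_def by blast
  have "(\<Union>C\<in>\<C>. {t \<in> X. \<gamma> t \<in> C}) = X" using assms(2) \<C>(2) by auto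
  then have "\<not> (\<forall>C\<in>\<C>. finite {t \<in> X. \<gamma> t \<in> C})"
    using assms(3) finite_UN[OF \<C>(1), of "\<lambda>C. {t \<in> X. \<gamma> t \<in> C}"] by simp
  then obtain C where C: "C \<in> \<C>" "infinite {t \<in> X. \<gamma> t \<in> C}" by blast
  obtain S where S: "S \<subseteq> {t \<in> X. \<gamma> t \<in> C}" "finite S" "card S = n + 1"
    using infinite_arbitrarily_large[OF C(2)] by blast
  have SX: "S \<subseteq> X" using S(1) by blast
  then have "card (\<gamma> ` S) = n + 1"
    using S(3) inj_on_subset[OF inj_on_power_coordinates[OF assms(4,5)]] by (simp add: card_image)
  moreover have "C \<subseteq> RT N" using \<C>(3) C(1) polyhedronT_subset_RT by blast
  moreover have "aff_indep (\<gamma> ` S)"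
    using S(2,3) by (intro aff_indep_power_coordinates[OF assms(4,5) SX]) simp_all
  moreover have "\<gamma> ` S \<subseteq> C" using S(1) by blast
  ultimately have "int (n + 1) - 1 \<le> adim C" using card_le_adim by metis
  moreover have "adim C \<le> d" using \<C>(3) C(1) by blast
  ultimately show ?thesis by simp
qed

lemma polyhedral_cover_W_f0_ge:
  assumes "N \<ge> 2" and "W f0 N \<subseteq> P" and "polyhedral_cover N P d"
  shows "int N + 1 \<le> d"
proof -
  have "moment_curve N t \<in> W f0 N" for t using assms(1) by (intro moment_curve_in_W) simp
  then have "moment_curve N ` {0<..<1} \<subseteq> P" using assms(2) by blast
  then have "int (N + 1) \<le> d"
    by (rule polyhedral_cover_ge_power_coordinates[OF assms(3) _ _
          moment_curve_power_coordinates[OF assms(1)]]) simp_all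
  then show ?thesis by simp
qed

lemma pdim_ge_if_W_f0_subset:
  assumes "N \<ge> 2" and "trop_lin_prevariety N P" and "W f0 N \<subseteq> P"
  shows "int N + 1 \<le> pdim N P"
  unfolding pdim_eq_Inf_polyhedral_cover
  using prevariety_polyhedral_cover[OF assms(2)] polyhedral_cover_W_f0_ge[OF assms(1,3)]
  by (intro cInf_greatest) auto

section \<open>The upper bound: rectangles\<close>

lemma rows_agree_off_new_colours:
  assumes no_rainbow: "card (col ` ({r, s} \<times> {j, n})) \<le> 3"
    and new: "col (r, n) \<noteq> col (s, n)" "col (r, n) \<notin> col ` (I \<times> J')" "col (s, n) \<notin> col ` (I \<times> J')"
    and old: "r \<in> I" "s \<in> I" "j \<in> J'"
  shows "col (r, j) = col (s, j)"
proof (rule ccontr)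
  assume "col (r, j) \<noteq> col (s, j)"
  moreover have "col (r, j) \<in> col ` (I \<times> J')" "col (s, j) \<in> col ` (I \<times> J')" using old by auto
  then have "col (r, j) \<noteq> col (r, n)" "col (r, j) \<noteq> col (s, n)"
    "col (s, j) \<noteq> col (r, n)" "col (s, j) \<noteq> col (s, n)" using new by metis+
  moreover have "col ` ({r, s} \<times> {j, n}) = {col (r, j), col (r, n), col (s, j), col (s, n)}" by auto
  ultimately have "card (col ` ({r, s} \<times> {j, n})) = 4" using new(1) by simp
  then show False using no_rainbow by simp
qed

lemma colours_grid_subset_drop_row:
  assumes "\<And>j. j \<in> J - {n} \<Longrightarrow> col (r, j) = col (s, j)" and "s \<in> I - {r}"
  shows "col ` (I \<times> J) \<subseteq> insert (col (r, n)) (col ` ((I - {r}) \<times> J))"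
proof clarify
  fix i j assume ij: "i \<in> I" "j \<in> J" "col (i, j) \<notin> col ` ((I - {r}) \<times> J)"
  then have "i = r" by auto
  moreover have "j = n"
  proof (rule ccontr)
    assume "j \<noteq> n"
    then have "col (i, j) = col (s, j)" using assms(1) ij(2) \<open>i = r\<close> by simp
    moreover have "col (s, j) \<in> col ` ((I - {r}) \<times> J)" using assms(2) ij(2) by simp
    ultimately show False using ij(3) by simp
  qed
  ultimately show "col (i, j) = col (r, n)" by simp
qed

text \<open>A column n bringing two new colours, in rows r and s, forces rows r and s to agree
  elsewhere, so that row r is redundant up to one colour.\<close>
lemma grid_column_or_row_removable:
  assumes "finite I" "finite J" "n \<in> J"
    and no_rainbow: "\<forall>i\<in>I. \<forall>i'\<in>I. \<forall>j\<in>J. \<forall>j'\<in>J. card (col ` ({i, i'} \<times> {j, j'})) \<le> 3"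
  shows "card (col ` (I \<times> J)) \<le> card (col ` (I \<times> (J - {n}))) + 1 \<or>
    (\<exists>r\<in>I. \<exists>s\<in>I - {r}. col ` (I \<times> J) \<subseteq> insert (col (r, n)) (col ` ((I - {r}) \<times> J)))"
proof -
  define new where "new = col ` (I \<times> {n}) - col ` (I \<times> (J - {n}))"
  have fin_new: "finite new" unfolding new_def using assms(1) by simp
  show ?thesis
  proof (cases "card new \<le> 1")
    case True
    have "col ` (I \<times> J) \<subseteq> col ` (I \<times> (J - {n})) \<union> new" unfolding new_def by auto
    then have "card (col ` (I \<times> J)) \<le> card (col ` (I \<times> (J - {n})) \<union> new)"
      using assms(1,2) fin_new by (intro card_mono) auto
    also have "\<dots> \<le> card (col ` (I \<times> (J - {n}))) + card new" by (rule card_Un_le)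
    finally show ?thesis using True by linarith
  next
    case False
    then obtain r s where rs: "r \<in> I" "s \<in> I" "col (r, n) \<noteq> col (s, n)"
      "col (r, n) \<notin> col ` (I \<times> (J - {n}))" "col (s, n) \<notin> col ` (I \<times> (J - {n}))"
      using card_le_Suc0_iff_eq[OF fin_new] by (auto simp: new_def)
    have "col (r, j) = col (s, j)" if "j \<in> J - {n}" for j
      using rows_agree_off_new_colours[OF _ rs(3-5) rs(1,2) that] no_rainbow rs(1,2) assms(3) that
      by blast
    moreover have "s \<in> I - {r}" using rs by auto
    ultimately show ?thesis using colours_grid_subset_drop_row rs(1) by blast
  qed
qed

lemma card_colours_grid_le:
  assumes "finite I" "finite J" "I \<noteq> {}" "J \<noteq> {}"
    and "\<forall>i\<in>I. \<forall>i'\<in>I. \<forall>j\<in>J. \<forall>j'\<in>J. card (col ` ({i, i'} \<times> {j, j'})) \<le> 3"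
  shows "card (col ` (I \<times> J)) + 1 \<le> card I + card J"
  using assms
proof (induct "card I + card J" arbitrary: I J rule: less_induct)
  case less
  note finI = less.prems(1) and finJ = less.prems(2) and neI = less.prems(3)
    and neJ = less.prems(4) and no_rainbow = less.prems(5)
  have cardI: "card I \<ge> 1" using finI neI by (simp add: Suc_le_eq card_gt_0_iff)
  show ?case
  proof (cases "card J = 1")
    case True
    then obtain j where "J = {j}" by (auto simp: card_Suc_eq)
    then have "col ` (I \<times> J) = (\<lambda>i. col (i, j)) ` I" by auto
    then show ?thesis using card_image_le[OF finI, of "\<lambda>i. col (i, j)"] True by simp
  next
    case False
    moreover have "card J \<noteq> 0" using finJ neJ by simp
    ultimately have cardJ: "card J \<ge> 2" by linarith
    then obtain n where n: "n \<in> J" by fastforce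
    have card_J': "card (J - {n}) = card J - 1" using n finJ by simp
    consider "card (col ` (I \<times> J)) \<le> card (col ` (I \<times> (J - {n}))) + 1"
      | r s where "r \<in> I" "s \<in> I - {r}"
        "col ` (I \<times> J) \<subseteq> insert (col (r, n)) (col ` ((I - {r}) \<times> J))"
      using grid_column_or_row_removable[OF finI finJ n no_rainbow] by blast
    then show ?thesis
    proof cases
      case 1
      have "J - {n} \<noteq> {}"
      proof
        assume "J - {n} = {}"
        then have "card (J - {n}) = 0" by (simp only: card.empty)
        then show False using card_J' cardJ by linarith
      qed
      moreover have "card I + card (J - {n}) < card I + card J" using card_J' cardJ by linarith
      moreover have "\<forall>i\<in>I. \<forall>i'\<in>I. \<forall>j\<in>J - {n}. \<forall>j'\<in>J - {n}. card (col ` ({i, i'} \<times> {j, j'})) \<le> 3"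
        using no_rainbow by blast
      ultimately have "card (col ` (I \<times> (J - {n}))) + 1 \<le> card I + card (J - {n})"
        using less.hyps finI finJ neI by blast
      then show ?thesis using 1 card_J' cardJ by linarith
    next
      case 2
      have card_I': "card (I - {r}) = card I - 1" using 2(1) finI by simp
      have "I - {r} \<noteq> {}" using 2(2) by blast
      moreover have "card (I - {r}) + card J < card I + card J" using card_I' cardI by linarith
      moreover have "\<forall>i\<in>I - {r}. \<forall>i'\<in>I - {r}. \<forall>j\<in>J. \<forall>j'\<in>J. card (col ` ({i, i'} \<times> {j, j'})) \<le> 3"
        using no_rainbow by blast
      ultimately have "card (col ` ((I - {r}) \<times> J)) + 1 \<le> card (I - {r}) + card J"
        using less.hyps finI finJ neJ by blast
      moreover have "card (col ` (I \<times> J)) \<le> card (insert (col (r, n)) (col ` ((I - {r}) \<times> J)))"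
        using 2(3) finI finJ by (intro card_mono) auto
      moreover have "\<dots> \<le> card (col ` ((I - {r}) \<times> J)) + 1"
        using finI finJ by (simp add: card_insert_if)
      ultimately show ?thesis using card_I' cardI by linarith
    qed
  qed
qed

definition rect_poly :: "(int \<times> int) set \<Rightarrow> tpoly" where
  "rect_poly Q k = (if k \<in> Q then Some 0 else None)"

lemma dom_rect_poly [simp]: "dom (rect_poly Q) = Q"
  unfolding rect_poly_def dom_def by auto

lemma the_rect_poly: "b \<in> Q \<Longrightarrow> the (rect_poly Q b) = 0"
  unfolding rect_poly_def by simp

lemma term_val_rect_poly:
  "b \<in> Q \<Longrightarrow> term_val (rect_poly Q) b x = real_of_int (fst b) * fst x + real_of_int (snd b) * snd x"
  unfolding term_val_def by (simp add: the_rect_poly)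

lemma trop_sol_rect_poly_X_axis:
  assumes "j \<noteq> j'" shows "trop_sol (rect_poly ({i, i'} \<times> {j, j'})) (s, 0)"
proof -
  obtain a where a: "a \<in> {i, i'}" "of_int a * s \<le> of_int i * s" "of_int a * s \<le> of_int i' * s"
    by (cases "of_int i * s \<le> of_int i' * s") auto
  show ?thesis unfolding trop_sol_def
    using assms a by (intro bexI[of _ "(a, j)"] bexI[of _ "(a, j')"]) (auto simp: term_val_rect_poly)
qed

lemma trop_sol_rect_poly_Y_axis:
  assumes "i \<noteq> i'" shows "trop_sol (rect_poly ({i, i'} \<times> {j, j'})) (0, r)"
proof -
  obtain b where b: "b \<in> {j, j'}" "of_int b * r \<le> of_int j * r" "of_int b * r \<le> of_int j' * r"
    by (cases "of_int j * r \<le> of_int j' * r") auto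
  show ?thesis unfolding trop_sol_def
    using assms b by (intro bexI[of _ "(i, b)"] bexI[of _ "(i', b)"]) (auto simp: term_val_rect_poly)
qed

lemma rect_poly_in_rad_f0:
  assumes "i \<noteq> i'" "j \<noteq> j'"
  shows "rect_poly ({i, i'} \<times> {j, j'}) \<in> rad f0"
  unfolding rad_def
proof (intro CollectI conjI subsetI)
  show "is_tpoly (rect_poly ({i, i'} \<times> {j, j'}))" unfolding is_tpoly_def by simp
  fix x assume "x \<in> V f0"
  then consider "x = (fst x, 0)" | "x = (0, snd x)" by (cases x) (auto simp: V_f0)
  then have "trop_sol (rect_poly ({i, i'} \<times> {j, j'})) x"
    using trop_sol_rect_poly_X_axis[OF assms(2)] trop_sol_rect_poly_Y_axis[OF assms(1)] by metis
  then show "x \<in> V (rect_poly ({i, i'} \<times> {j, j'}))" unfolding V_def by simp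
qed

definition rect_polys :: "nat \<Rightarrow> tpoly set" where
  "rect_polys N = {rect_poly ({i, i'} \<times> {j, j'}) | i i' j j'.
     {i, i'} \<subseteq> {0..<int N} \<and> {j, j'} \<subseteq> {0..<int N} \<and> i \<noteq> i' \<and> j \<noteq> j'}"

definition rect_prevariety :: "nat \<Rightarrow> (int \<times> int \<Rightarrow> real) set" where
  "rect_prevariety N = {w \<in> RT N. \<forall>g\<in>rect_polys N. lin_sat g w}"

lemma finite_rect_polys: "finite (rect_polys N)"
proof (rule finite_subset)
  show "rect_polys N \<subseteq> rect_poly ` Pow (T N)"
  proof
    fix g assume "g \<in> rect_polys N"
    then obtain i i' j j' where "g = rect_poly ({i, i'} \<times> {j, j'})"
      "{i, i'} \<subseteq> {0..<int N}" "{j, j'} \<subseteq> {0..<int N}"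
      unfolding rect_polys_def by blast
    then show "g \<in> rect_poly ` Pow (T N)" unfolding T_def by (intro image_eqI) auto
  qed
qed simp

lemma rect_polysD:
  assumes "g \<in> rect_polys N"
  shows "g \<in> rad f0" and "is_tpoly g" and "dom g \<subseteq> T N"
proof -
  obtain i i' j j' where g: "g = rect_poly ({i, i'} \<times> {j, j'})"
    "{i, i'} \<subseteq> {0..<int N}" "{j, j'} \<subseteq> {0..<int N}" "i \<noteq> i'" "j \<noteq> j'"
    using assms unfolding rect_polys_def by blast
  show "g \<in> rad f0" unfolding g(1) using g(4,5) by (rule rect_poly_in_rad_f0)
  then show "is_tpoly g" unfolding rad_def by simp
  show "dom g \<subseteq> T N" unfolding g(1) dom_rect_poly T_def using g(2,3) by (rule Sigma_mono)
qed

lemma rect_prevariety_is_prevariety: "trop_lin_prevariety N (rect_prevariety N)"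
  unfolding trop_lin_prevariety_def rect_prevariety_def
  by (intro exI[of _ "rect_polys N"]) (simp add: finite_rect_polys rect_polysD(2,3))

lemma W_f0_subset_rect_prevariety: "W f0 N \<subseteq> rect_prevariety N"
  unfolding W_def rect_prevariety_def using rect_polysD(1,3) by auto

lemma card_rectangle_le_4: "card ({i, i'} \<times> {j, j'}) \<le> 4"
proof -
  have "card ({i, i'} \<times> {j, j'}) = card {i, i'} * card {j, j'}" by (rule card_cartesian_product)
  also have "\<dots> \<le> 2 * 2" by (intro mult_le_mono) (simp_all add: card_insert_if)
  finally show ?thesis by simp
qed

text \<open>On a cell of the rectangle prevariety every rectangle has two corners at which all points of
  the cell agree, so colouring k by the function w \<mapsto> w k on the cell leaves no rectangle with
  four colours.\<close>
lemma rect_cell_no_rainbow: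
  assumes eq: "\<forall>g\<in>rect_polys N. \<exists>b\<in>dom g. \<exists>c\<in>dom g. b \<noteq> c \<and> (\<forall>w\<in>C. the (g b) + w b = the (g c) + w c)"
    and ij: "{i, i'} \<subseteq> {0..<int N}" "{j, j'} \<subseteq> {0..<int N}"
  shows "card ((\<lambda>k. restrict (\<lambda>w. w k) C) ` ({i, i'} \<times> {j, j'})) \<le> 3"
    (is "card (?col ` ?Q) \<le> 3")
proof (cases "i = i' \<or> j = j'")
  case True
  then have "card {i, i'} * card {j, j'} \<le> 2" by (auto simp: card_insert_if)
  then have "card ?Q \<le> 2" by (simp only: card_cartesian_product)
  then show ?thesis using card_image_le[of ?Q ?col] by simp
next
  case False
  have "rect_poly ?Q \<in> rect_polys N"
    unfolding rect_polys_def mem_Collect_eq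
    by (rule exI[of _ i], rule exI[of _ i'], rule exI[of _ j], rule exI[of _ j'])
      (use ij False in simp)
  from bspec[OF eq this] obtain b c where bc: "b \<in> ?Q" "c \<in> ?Q" "b \<noteq> c"
    "\<forall>w\<in>C. the (rect_poly ?Q b) + w b = the (rect_poly ?Q c) + w c"
    unfolding dom_rect_poly by (elim bexE conjE)
  then have "\<forall>w\<in>C. w b = w c" by (simp add: the_rect_poly)
  then have "?col b = ?col c" by (intro restrict_ext) simp
  then have "\<not> inj_on ?col ?Q" using bc(1-3) unfolding inj_on_def by blast
  moreover have "finite ?Q" by simp
  ultimately have "card (?col ` ?Q) \<noteq> card ?Q" using inj_on_iff_eq_card by blast
  then show ?thesis using card_image_le[of ?Q ?col] card_rectangle_le_4[of i i' j j'] by simp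
qed

lemma adim_rect_cell_le:
  assumes C: "C \<subseteq> RT N"
    and eq: "\<forall>g\<in>rect_polys N. \<exists>b\<in>dom g. \<exists>c\<in>dom g. b \<noteq> c \<and> (\<forall>w\<in>C. the (g b) + w b = the (g c) + w c)"
    and "N \<ge> 1"
  shows "adim C \<le> 2 * int N - 1"
proof -
  define col where "col k = restrict (\<lambda>w. w k) C" for k :: "int \<times> int"
  have T: "T N = {0..<int N} \<times> {0..<int N}" unfolding T_def ..
  have "card (col ` T N) + 1 \<le> 2 * N"
    using card_colours_grid_le[of "{0..<int N}" "{0..<int N}" col] \<open>N \<ge> 1\<close>
      rect_cell_no_rainbow[OF eq] unfolding T col_def by simp
  moreover have "card A \<le> card (col ` T N) + 1" if "A \<subseteq> C" "aff_indep A" for A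
  proof (rule card_aff_indep_le_fibres)
    show "\<forall>a\<in>A. \<forall>k\<in>T N. \<forall>k'\<in>T N. col k = col k' \<longrightarrow> a k = a k'"
      using that(1) unfolding col_def by (metis restrict_apply' subsetD)
  qed (use that C in auto)
  ultimately show ?thesis using adim_le[of C "card (col ` T N) + 1"] by fastforce
qed

lemma rect_prevariety_polyhedral_cover:
  assumes "N \<ge> 1" shows "polyhedral_cover N (rect_prevariety N) (2 * int N - 1)"
proof -
  have "\<forall>g\<in>rect_polys N. is_tpoly g \<and> dom g \<subseteq> T N" using rect_polysD(2,3) by blast
  from prevariety_lin_cells[OF finite_rect_polys this] obtain \<C> where
    \<C>: "finite \<C>" "\<Union>\<C> = rect_prevariety N"
    "\<forall>C\<in>\<C>. polyhedronT N C \<and> (\<forall>g\<in>rect_polys N. \<exists>b\<in>dom g. \<exists>c\<in>dom g. b \<noteq> c \<and>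
        (\<forall>w\<in>C. the (g b) + w b = the (g c) + w c))"
    unfolding rect_prevariety_def by blast
  have "polyhedronT N C \<and> adim C \<le> 2 * int N - 1" if "C \<in> \<C>" for C
    using \<C>(3) that adim_rect_cell_le[OF polyhedronT_subset_RT _ assms] by blast
  then show ?thesis unfolding polyhedral_cover_def using \<C>(1,2) by blast
qed

lemma pdim_rect_prevariety_le:
  assumes "N \<ge> 2" shows "pdim N (rect_prevariety N) \<le> 2 * int N - 1"
  unfolding pdim_eq_Inf_polyhedral_cover
proof (rule cInf_lower)
  show "2 * int N - 1 \<in> {d. polyhedral_cover N (rect_prevariety N) d}"
    using rect_prevariety_polyhedral_cover assms by simp
  show "bdd_below {d. polyhedral_cover N (rect_prevariety N) d}"
    using polyhedral_cover_W_f0_ge[OF assms W_f0_subset_rect_prevariety] by (intro bdd_belowI) auto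
qed

theorem mainTheorem4:
  fixes N :: nat
  assumes "N \<ge> 2"
  shows "int N + 1 \<le> dimW f0 N \<and> dimW f0 N \<le> 4 * int N"
proof -
  let ?D = "{pdim N P | P. trop_lin_prevariety N P \<and> W f0 N \<subseteq> P}"
  have rect: "pdim N (rect_prevariety N) \<in> ?D"
    using rect_prevariety_is_prevariety W_f0_subset_rect_prevariety by blast
  have lower: "\<forall>d\<in>?D. int N + 1 \<le> d" using pdim_ge_if_W_f0_subset[OF assms] by blast
  have "int N + 1 \<le> Inf ?D" using rect lower by (intro cInf_greatest) auto
  moreover have "Inf ?D \<le> pdim N (rect_prevariety N)"
    using rect lower by (intro cInf_lower bdd_belowI) auto
  ultimately show ?thesis using pdim_rect_prevariety_le[OF assms] unfolding dimW_def by linarith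
qed

end
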